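(* Let $n\ge1$, $1\le i\le n$ be integers, $\alpha,\beta>0$, $\tau\ge0$ with $i\beta(\tau+1)>\tau$. Then $$\xi^{(i)}_\tau(\alpha)=\int_0^\infty\frac{\partial}{\partial\alpha}\log f^{(i)}_{\alpha,\beta}(x)\, f^{(i)}_{\alpha,\beta}(x)^{\tau+1}\,dx=c(i,n)^{\tau+1}\left(\frac{\beta}{\alpha}\right)^{\tau+1}B\!\left(\frac{(n-i+1)\tau\beta+(n-i+1)\beta+\tau}{\beta},\frac{i\tau\beta+i\beta-\tau}{\beta}\right)\left(\frac{-\tau}{\beta+\tau\beta}\right),$$ and $K^{(i)}_\tau(\alpha)=J^{(i)}_{2\tau}(\alpha)-\xi^{(i)}_\tau(\alpha)^2$.
   Context: $c(i,n)=\frac{n!}{(n-i)!(i-1)!}$ and $f^{(i)}_{\alpha,\beta}(x)=\frac{c(i,n)\beta (x/\alpha)^{i\beta-1}}{\alpha(1+(x/\alpha)^\beta)^{n+1}}$, $x>0$, is the density of the $i$-th order statistic of a sample of size $n$ from the log-logistic distribution with scale $\alpha$ and shape $\beta$. Derivatives are with respect to $\alpha$ with $\beta$ known. $J^{(i)}_\tau(\alpha)=\int_0^\infty(\partial_\alpha\log f^{(i)}_{\alpha,\beta})^2 (f^{(i)}_{\alpha,\beta})^{\tau+1}dx$, and $K^{(i)}_\tau(\alpha)$ denotes the quantity $J^{(i)}_{2\tau}(\alpha)-\xi^{(i)}_\tau(\alpha)^2$. $B$ is the Beta function. *)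

theory Defs
  imports "HOL-Analysis.Analysis"
begin

definition cst :: "nat \<Rightarrow> nat \<Rightarrow> real" where
  "cst i n = fact n / (fact (n - i) * fact (i - 1))"

text \<open>Density of the i-th order statistic of a log-logistic sample of size n,
  scale alpha, shape beta, for x > 0.\<close>
definition fos :: "nat \<Rightarrow> nat \<Rightarrow> real \<Rightarrow> real \<Rightarrow> real \<Rightarrow> real" where
  "fos i n \<alpha> \<beta> x =
     cst i n * \<beta> * (x / \<alpha>) powr (real i * \<beta> - 1)
     / (\<alpha> * (1 + (x / \<alpha>) powr \<beta>) ^ (n + 1))"

definition score :: "nat \<Rightarrow> nat \<Rightarrow> real \<Rightarrow> real \<Rightarrow> real \<Rightarrow> real" where
  "score i n \<alpha> \<beta> x = deriv (\<lambda>a. ln (fos i n a \<beta> x)) \<alpha>"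

definition xi :: "nat \<Rightarrow> nat \<Rightarrow> real \<Rightarrow> real \<Rightarrow> real \<Rightarrow> real" where
  "xi i n \<tau> \<alpha> \<beta> =
     (LINT x:{0<..}|lborel. score i n \<alpha> \<beta> x * fos i n \<alpha> \<beta> x powr (\<tau> + 1))"

definition J :: "nat \<Rightarrow> nat \<Rightarrow> real \<Rightarrow> real \<Rightarrow> real \<Rightarrow> real" where
  "J i n \<tau> \<alpha> \<beta> =
     (LINT x:{0<..}|lborel. (score i n \<alpha> \<beta> x)\<^sup>2 * fos i n \<alpha> \<beta> x powr (\<tau> + 1))"

definition K :: "nat \<Rightarrow> nat \<Rightarrow> real \<Rightarrow> real \<Rightarrow> real \<Rightarrow> real" where
  "K i n \<tau> \<alpha> \<beta> = J i n (2 * \<tau>) \<alpha> \<beta> - (xi i n \<tau> \<alpha> \<beta>)\<^sup>2"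

end

theory Submission
  imports Defs
begin

(* The substitution s = F(x), with F the log-logistic distribution function of scale alpha and
   shape beta, carries the integral over (0, oo) to one over (0, 1). Since
   f_(i) = c F^(i-1) (1 - F)^(n-i) f and f = (beta/alpha) F^(1-1/beta) (1 - F)^(1+1/beta),
   the (tau+1)-st power of f_(i) is f times a Beta kernel in F, and the score is affine in F:
   d/d alpha log f_(i) = ((n+1) beta F - i beta) / alpha. Hence xi is a combination of
   B(a, b) and B(a + 1, b) = a/(a+b) B(a, b), which collapses to the stated multiple of B(a, b). *)

definition loglogistic_cdf :: "real \<Rightarrow> real \<Rightarrow> real \<Rightarrow> real" where
  "loglogistic_cdf \<alpha> \<beta> x = (x / \<alpha>) powr \<beta> / (1 + (x / \<alpha>) powr \<beta>)"

definition loglogistic_pdf :: "real \<Rightarrow> real \<Rightarrow> real \<Rightarrow> real" where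
  "loglogistic_pdf \<alpha> \<beta> x = \<beta> / \<alpha> * (x / \<alpha>) powr (\<beta> - 1) / (1 + (x / \<alpha>) powr \<beta>)\<^sup>2"

lemma one_plus_powr_pos: "0 < 1 + (y :: real) powr p"
  by (simp add: add_pos_nonneg)

lemma loglogistic_cdf_bounds:
  assumes "\<alpha> > 0" "x > 0"
  shows "0 < loglogistic_cdf \<alpha> \<beta> x" "loglogistic_cdf \<alpha> \<beta> x < 1"
  using assms one_plus_powr_pos [of "x / \<alpha>" \<beta>] by (simp_all add: loglogistic_cdf_def)

lemma one_minus_loglogistic_cdf:
  "1 - loglogistic_cdf \<alpha> \<beta> x = 1 / (1 + (x / \<alpha>) powr \<beta>)"
  using one_plus_powr_pos [of "x / \<alpha>" \<beta>] by (simp add: loglogistic_cdf_def field_simps)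

lemma loglogistic_cdf_powr_mult_powr:
  assumes "\<alpha> > 0" "x > 0"
  shows "loglogistic_cdf \<alpha> \<beta> x powr p * (1 - loglogistic_cdf \<alpha> \<beta> x) powr q
           = (x / \<alpha>) powr (\<beta> * p) / (1 + (x / \<alpha>) powr \<beta>) powr (p + q)"
proof -
  define u where "u = x / \<alpha>"
  define t where "t = 1 + u powr \<beta>"
  have "u > 0" "t > 0"
    using assms by (simp_all add: u_def t_def one_plus_powr_pos)
  then have "(u powr \<beta> / t) powr p * (1 / t) powr q = u powr (\<beta> * p) / t powr (p + q)"
    by (simp add: powr_divide powr_powr powr_add)
  then show ?thesis
    by (simp only: one_minus_loglogistic_cdf) (simp only: loglogistic_cdf_def u_def t_def)
qed

lemma loglogistic_cdf_has_real_derivative: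
  assumes "\<alpha> > 0" "x > 0"
  shows "(loglogistic_cdf \<alpha> \<beta> has_real_derivative loglogistic_pdf \<alpha> \<beta> x) (at x)"
  using assms one_plus_powr_pos [of "x / \<alpha>" \<beta>]
  unfolding loglogistic_cdf_def [abs_def] loglogistic_pdf_def
  by (auto intro!: derivative_eq_intros simp: field_simps power2_eq_square)

lemma bij_betw_loglogistic_cdf:
  assumes "\<alpha> > 0" "\<beta> > 0"
  shows "bij_betw (loglogistic_cdf \<alpha> \<beta>) {0<..} {0<..<1}"
proof (rule bij_betw_byWitness [where f' = "\<lambda>y. \<alpha> * (y / (1 - y)) powr (1 / \<beta>)"])
  have odds: "loglogistic_cdf \<alpha> \<beta> x / (1 - loglogistic_cdf \<alpha> \<beta> x) = (x / \<alpha>) powr \<beta>" for x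
    using one_plus_powr_pos [of "x / \<alpha>" \<beta>]
    by (simp only: one_minus_loglogistic_cdf) (simp add: loglogistic_cdf_def)
  show "\<forall>x\<in>{0<..}. \<alpha> * (loglogistic_cdf \<alpha> \<beta> x / (1 - loglogistic_cdf \<alpha> \<beta> x)) powr (1 / \<beta>) = x"
    using assms by (simp add: odds powr_powr)
  show "\<forall>y\<in>{0<..<1}. loglogistic_cdf \<alpha> \<beta> (\<alpha> * (y / (1 - y)) powr (1 / \<beta>)) = y"
    using assms by (auto simp: loglogistic_cdf_def powr_powr field_simps)
  show "loglogistic_cdf \<alpha> \<beta> ` {0<..} \<subseteq> {0<..<1}"
    using assms loglogistic_cdf_bounds by auto
  show "(\<lambda>y. \<alpha> * (y / (1 - y)) powr (1 / \<beta>)) ` {0<..<1} \<subseteq> {0<..}"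
    using assms by auto
qed

lemma loglogistic_pdf_pos:
  assumes "\<alpha> > 0" "\<beta> > 0" "x > 0"
  shows "loglogistic_pdf \<alpha> \<beta> x > 0"
  using assms one_plus_powr_pos [of "x / \<alpha>" \<beta>] by (simp add: loglogistic_pdf_def)

lemma loglogistic_pdf_eq_cdf:
  assumes "\<alpha> > 0" "\<beta> > 0" "x > 0"
  shows "loglogistic_pdf \<alpha> \<beta> x = \<beta> / \<alpha> * loglogistic_cdf \<alpha> \<beta> x powr (1 - 1 / \<beta>)
           * (1 - loglogistic_cdf \<alpha> \<beta> x) powr (1 + 1 / \<beta>)"
proof -
  have "\<beta> * (1 - 1 / \<beta>) = \<beta> - 1" "(1 - 1 / \<beta>) + (1 + 1 / \<beta>) = 2"
    using assms by (simp_all add: field_simps)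
  then show ?thesis
    using assms one_plus_powr_pos [of "x / \<alpha>" \<beta>]
    by (simp add: mult.assoc loglogistic_cdf_powr_mult_powr loglogistic_pdf_def)
qed

lemma loglogistic_substitution:
  assumes "\<alpha> > 0" "\<beta> > 0"
    and h: "h absolutely_integrable_on {0<..<1}" and [measurable]: "h \<in> borel_measurable borel"
  shows "set_integrable lborel {0<..} (\<lambda>x. loglogistic_pdf \<alpha> \<beta> x * h (loglogistic_cdf \<alpha> \<beta> x))"
    and "(LINT x:{0<..}|lborel. loglogistic_pdf \<alpha> \<beta> x * h (loglogistic_cdf \<alpha> \<beta> x))
           = integral {0<..<1} h"
proof -
  let ?f = "\<lambda>x. loglogistic_pdf \<alpha> \<beta> x * h (loglogistic_cdf \<alpha> \<beta> x)"
  let ?g = "\<lambda>x. \<bar>loglogistic_pdf \<alpha> \<beta> x\<bar> * h (loglogistic_cdf \<alpha> \<beta> x)"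
  have eq: "?g x = ?f x" if "x \<in> {0<..}" for x
    using loglogistic_pdf_pos [of \<alpha> \<beta> x] assms that by simp
  have "?g absolutely_integrable_on {0<..} \<and> integral {0<..} ?g = integral {0<..<1} h"
    using h bij_betw_loglogistic_cdf [OF assms(1,2)] assms(1)
    by (subst has_absolute_integral_change_of_variables_1')
       (auto simp: bij_betw_def intro: has_field_derivative_at_within loglogistic_cdf_has_real_derivative)
  moreover have "?g absolutely_integrable_on {0<..} \<longleftrightarrow> ?f absolutely_integrable_on {0<..}"
    by (rule set_integrable_cong) (simp_all add: eq)
  moreover have "integral {0<..} ?g = integral {0<..} ?f"
    by (rule integral_cong) (rule eq)
  ultimately have "?f absolutely_integrable_on {0<..}" and f_integral: "integral {0<..} ?f = integral {0<..<1} h"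
    by simp_all
  moreover have "set_borel_measurable lborel {0<..} ?f"
    unfolding set_borel_measurable_def loglogistic_pdf_def loglogistic_cdf_def by measurable
  ultimately show integrable: "set_integrable lborel {0<..} ?f"
    unfolding set_integrable_def set_borel_measurable_def
    by (subst integrable_completion [symmetric]) auto
  show "(LINT x:{0<..}|lborel. ?f x) = integral {0<..<1} h"
    using set_borel_integral_eq_integral(2) [OF integrable] f_integral by simp
qed

lemma Beta_kernel_affine_integral:
  fixes a b p q :: real
  defines "g \<equiv> \<lambda>s. (p + q * s) * (s powr (a - 1) * (1 - s) powr (b - 1))"
  assumes "a > 0" "b > 0"
  shows "g absolutely_integrable_on {0<..<1}"
    and "integral {0<..<1} g = (p + q * a / (a + b)) * Beta a b"
proof -
  have kernel: "((\<lambda>s. s powr (c - 1) * (1 - s) powr (b - 1)) has_integral Beta c b) {0<..<1}"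
    if "c > 0" for c
    using has_integral_Beta_real [OF that \<open>b > 0\<close>] by (simp add: has_integral_Icc_iff_Ioo)
  have shifted: "((\<lambda>s. s * (s powr (a - 1) * (1 - s) powr (b - 1))) has_integral Beta (a + 1) b) {0<..<1}"
  proof (rule has_integral_eq [OF _ kernel])
    show "s powr (a + 1 - 1) * (1 - s) powr (b - 1) = s * (s powr (a - 1) * (1 - s) powr (b - 1))"
      if "s \<in> {0<..<1}" for s
      using that by (simp add: powr_mult_base)
  qed (use \<open>a > 0\<close> in simp)
  have "(a + b) * Beta (a + 1) b = a * Beta a b"
    using \<open>a > 0\<close> by (intro Beta_plus1_left) auto
  then have "Beta (a + 1) b = a / (a + b) * Beta a b"
    using assms by (simp add: field_simps)
  then have "(g has_integral (p + q * a / (a + b)) * Beta a b) {0<..<1}"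
    unfolding g_def
    using has_integral_add [OF has_integral_mult_left [OF kernel [OF \<open>a > 0\<close>], of p]
                               has_integral_mult_left [OF shifted, of q]]
    by (simp add: algebra_simps)
  then show "integral {0<..<1} g = (p + q * a / (a + b)) * Beta a b"
    by (rule integral_unique)
  have "(\<lambda>s. s powr (a - 1) * (1 - s) powr (b - 1)) absolutely_integrable_on {0<..<1}"
    using kernel [OF \<open>a > 0\<close>] by (intro nonnegative_absolutely_integrable_1) auto
  moreover have "(\<lambda>s. s * (s powr (a - 1) * (1 - s) powr (b - 1))) absolutely_integrable_on {0<..<1}"
    using shifted by (intro nonnegative_absolutely_integrable_1) auto
  ultimately have "(\<lambda>s. p * (s powr (a - 1) * (1 - s) powr (b - 1))
                     + q * (s * (s powr (a - 1) * (1 - s) powr (b - 1)))) absolutely_integrable_on {0<..<1}"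
    by (intro set_integral_add set_integrable_mult_right)
  then show "g absolutely_integrable_on {0<..<1}"
    unfolding g_def by (simp add: algebra_simps)
qed

lemma cst_pos: "cst i n > 0"
  unfolding cst_def by simp

lemma fos_eq_loglogistic:
  assumes "1 \<le> i" "i \<le> n" "\<alpha> > 0" "x > 0"
  shows "fos i n \<alpha> \<beta> x = cst i n * loglogistic_cdf \<alpha> \<beta> x ^ (i - 1)
           * (1 - loglogistic_cdf \<alpha> \<beta> x) ^ (n - i) * loglogistic_pdf \<alpha> \<beta> x"
proof -
  define u where "u = x / \<alpha>"
  define t where "t = 1 + u powr \<beta>"
  have "u > 0" "t > 0"
    using assms by (simp_all add: u_def t_def one_plus_powr_pos)
  have u_powr: "u powr (real i * \<beta> - 1) = u powr (\<beta> * real (i - 1)) * u powr (\<beta> - 1)"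
    using assms by (simp add: powr_add [symmetric] of_nat_diff algebra_simps)
  have "t powr (real n - 1) * t powr 2 = t powr real (n + 1)"
    by (simp add: powr_add [symmetric])
  then have t_power: "t ^ (n + 1) = t powr (real n - 1) * t\<^sup>2"
    using powr_realpow [OF \<open>t > 0\<close>, of "n + 1"] \<open>t > 0\<close> by simp
  have "fos i n \<alpha> \<beta> x = cst i n * (u powr (\<beta> * real (i - 1)) / t powr (real n - 1))
                              * (\<beta> / \<alpha> * u powr (\<beta> - 1) / t\<^sup>2)"
    unfolding fos_def u_def [symmetric] t_def [symmetric] u_powr t_power by (simp add: mult_ac)
  also have "u powr (\<beta> * real (i - 1)) / t powr (real n - 1)
               = loglogistic_cdf \<alpha> \<beta> x ^ (i - 1) * (1 - loglogistic_cdf \<alpha> \<beta> x) ^ (n - i)"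
  proof -
    have "real (i - 1) + real (n - i) = real n - 1"
      using assms by (simp add: of_nat_diff)
    then have "u powr (\<beta> * real (i - 1)) / t powr (real n - 1)
                 = loglogistic_cdf \<alpha> \<beta> x powr real (i - 1) * (1 - loglogistic_cdf \<alpha> \<beta> x) powr real (n - i)"
      using assms by (simp add: loglogistic_cdf_powr_mult_powr u_def t_def)
    then show ?thesis
      using loglogistic_cdf_bounds [OF assms(3,4), of \<beta>] by (simp add: powr_realpow)
  qed
  also have "\<beta> / \<alpha> * u powr (\<beta> - 1) / t\<^sup>2 = loglogistic_pdf \<alpha> \<beta> x"
    by (simp add: loglogistic_pdf_def u_def t_def)
  finally show ?thesis
    by (simp only: mult.assoc)
qed

lemma fos_powr_eq_loglogistic:
  assumes "1 \<le> i" "i \<le> n" "\<alpha> > 0" "\<beta> > 0" "x > 0"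
  shows "fos i n \<alpha> \<beta> x powr (\<tau> + 1) = cst i n powr (\<tau> + 1) * (\<beta> / \<alpha>) powr \<tau>
           * loglogistic_cdf \<alpha> \<beta> x powr (real i * (\<tau> + 1) - \<tau> / \<beta> - 1)
           * (1 - loglogistic_cdf \<alpha> \<beta> x) powr (real (n - i + 1) * (\<tau> + 1) + \<tau> / \<beta> - 1)
           * loglogistic_pdf \<alpha> \<beta> x"
proof -
  let ?F = "loglogistic_cdf \<alpha> \<beta> x" and ?f = "loglogistic_pdf \<alpha> \<beta> x"
  have F: "0 < ?F" "?F < 1" and f: "0 < ?f"
    using assms loglogistic_cdf_bounds loglogistic_pdf_pos by auto
  have "fos i n \<alpha> \<beta> x = cst i n * ?F powr real (i - 1) * (1 - ?F) powr real (n - i) * ?f"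
    using F by (simp only: fos_eq_loglogistic [OF assms(1-3,5)] powr_realpow diff_gt_0_iff_gt)
  then have "fos i n \<alpha> \<beta> x powr (\<tau> + 1) = cst i n powr (\<tau> + 1)
               * ?F powr (real (i - 1) * (\<tau> + 1)) * (1 - ?F) powr (real (n - i) * (\<tau> + 1))
               * ?f powr (\<tau> + 1)"
    by (simp only: powr_mult powr_powr)
  also have "?f powr (\<tau> + 1) = ?f powr \<tau> * ?f"
    using f by (simp add: powr_add)
  also have "?f powr \<tau> = (\<beta> / \<alpha>) powr \<tau> * ?F powr ((1 - 1 / \<beta>) * \<tau>) * (1 - ?F) powr ((1 + 1 / \<beta>) * \<tau>)"
    by (simp only: loglogistic_pdf_eq_cdf [OF assms(3-5)] powr_mult powr_powr)
  finally show ?thesis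
    using assms F
    by (simp add: powr_add [symmetric] of_nat_diff field_simps)
qed

lemma ln_fos_eq:
  assumes "a > 0" "\<beta> > 0" "x > 0"
  shows "ln (fos i n a \<beta> x) = ln (cst i n) + ln \<beta> + (real i * \<beta> - 1) * (ln x - ln a) - ln a
           - real (n + 1) * ln (1 + (x / a) powr \<beta>)"
  using assms cst_pos [of i n] one_plus_powr_pos [of "x / a" \<beta>]
  by (simp add: fos_def ln_div ln_mult ln_powr ln_realpow del: power_Suc of_nat_Suc)

lemma has_real_derivative_ln_one_plus_powr:
  assumes "\<alpha> > 0" "x > 0"
  shows "((\<lambda>a. ln (1 + (x / a) powr \<beta>)) has_real_derivative - \<beta> * loglogistic_cdf \<alpha> \<beta> x / \<alpha>) (at \<alpha>)"
proof -
  have "((\<lambda>a. 1 + (x / a) powr \<beta>) has_real_derivative \<beta> * (x / \<alpha>) powr (\<beta> - 1) * (- x / \<alpha>\<^sup>2)) (at \<alpha>)"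
    using assms by (auto intro!: derivative_eq_intros simp: power2_eq_square)
  also have "\<beta> * (x / \<alpha>) powr (\<beta> - 1) * (- x / \<alpha>\<^sup>2) = - \<beta> * (x / \<alpha>) powr \<beta> / \<alpha>"
    using powr_mult_base [of "x / \<alpha>" "\<beta> - 1"] assms by (simp add: power2_eq_square field_simps)
  finally have "((\<lambda>a. ln (1 + (x / a) powr \<beta>)) has_real_derivative
                  1 / (1 + (x / \<alpha>) powr \<beta>) * (- \<beta> * (x / \<alpha>) powr \<beta> / \<alpha>)) (at \<alpha>)"
    by (rule DERIV_chain2 [where g = "\<lambda>a. 1 + (x / a) powr \<beta>",
                           OF DERIV_ln_divide [OF one_plus_powr_pos]])
  then show ?thesis
    by (simp add: loglogistic_cdf_def)
qed

lemma score_eq: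
  assumes "\<alpha> > 0" "\<beta> > 0" "x > 0"
  shows "score i n \<alpha> \<beta> x = (real (n + 1) * \<beta> * loglogistic_cdf \<alpha> \<beta> x - real i * \<beta>) / \<alpha>"
proof -
  let ?F = "loglogistic_cdf \<alpha> \<beta> x"
  have "((\<lambda>a. ln (cst i n) + ln \<beta> + (real i * \<beta> - 1) * (ln x - ln a) - ln a
              - real (n + 1) * ln (1 + (x / a) powr \<beta>)) has_real_derivative
          0 + 0 + (real i * \<beta> - 1) * (0 - 1 / \<alpha>) - 1 / \<alpha> - real (n + 1) * (- \<beta> * ?F / \<alpha>)) (at \<alpha>)"
    using assms
    by (intro DERIV_diff DERIV_add DERIV_cmult DERIV_const DERIV_ln_divide has_real_derivative_ln_one_plus_powr)
  also have "0 + 0 + (real i * \<beta> - 1) * (0 - 1 / \<alpha>) - 1 / \<alpha> - real (n + 1) * (- \<beta> * ?F / \<alpha>)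
               = (real (n + 1) * \<beta> * ?F - real i * \<beta>) / \<alpha>"
    using assms by (simp add: field_simps)
  finally have "((\<lambda>a. ln (fos i n a \<beta> x)) has_real_derivative
                   (real (n + 1) * \<beta> * ?F - real i * \<beta>) / \<alpha>) (at \<alpha>)"
    by (rule has_field_derivative_transform_within_open [where S = "{0<..}"])
       (use assms ln_fos_eq in auto)
  then show ?thesis
    unfolding score_def by (rule DERIV_imp_deriv)
qed

lemma score_mult_fos_powr_eq:
  assumes "1 \<le> i" "i \<le> n" "\<alpha> > 0" "\<beta> > 0" "x > 0"
  shows "score i n \<alpha> \<beta> x * fos i n \<alpha> \<beta> x powr (\<tau> + 1) = loglogistic_pdf \<alpha> \<beta> x
           * (cst i n powr (\<tau> + 1) * (\<beta> / \<alpha>) powr \<tau> / \<alpha>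
              * (real (n + 1) * \<beta> * loglogistic_cdf \<alpha> \<beta> x - real i * \<beta>)
              * (loglogistic_cdf \<alpha> \<beta> x powr (real i * (\<tau> + 1) - \<tau> / \<beta> - 1)
                 * (1 - loglogistic_cdf \<alpha> \<beta> x) powr (real (n - i + 1) * (\<tau> + 1) + \<tau> / \<beta> - 1)))"
  unfolding score_eq [OF assms(3-5)] fos_powr_eq_loglogistic [OF assms]
  by (simp add: mult_ac)

lemma xi_eq_Beta_combination:
  fixes n i :: nat and \<alpha> \<beta> \<tau> :: real
  defines "a \<equiv> real i * (\<tau> + 1) - \<tau> / \<beta>" and "b \<equiv> real (n - i + 1) * (\<tau> + 1) + \<tau> / \<beta>"
  assumes i: "1 \<le> i" "i \<le> n" and pos: "\<alpha> > 0" "\<beta> > 0" and "a > 0" "b > 0"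
  shows "set_integrable lborel {0<..} (\<lambda>x. score i n \<alpha> \<beta> x * fos i n \<alpha> \<beta> x powr (\<tau> + 1))"
    and "xi i n \<tau> \<alpha> \<beta> = cst i n powr (\<tau> + 1) * (\<beta> / \<alpha>) powr \<tau> / \<alpha>
           * (real (n + 1) * \<beta> * a / (a + b) - real i * \<beta>) * Beta a b"
proof -
  define C where "C = cst i n powr (\<tau> + 1) * (\<beta> / \<alpha>) powr \<tau> / \<alpha>"
  define h where "h s = C * (real (n + 1) * \<beta> * s - real i * \<beta>) * (s powr (a - 1) * (1 - s) powr (b - 1))"
    for s :: real
  have integrand: "score i n \<alpha> \<beta> x * fos i n \<alpha> \<beta> x powr (\<tau> + 1)
                     = loglogistic_pdf \<alpha> \<beta> x * h (loglogistic_cdf \<alpha> \<beta> x)" if "x \<in> {0<..}" for x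
    unfolding h_def C_def a_def b_def using that by (intro score_mult_fos_powr_eq i pos) simp
  have "h = (\<lambda>s. (- C * real i * \<beta> + C * real (n + 1) * \<beta> * s) * (s powr (a - 1) * (1 - s) powr (b - 1)))"
    by (simp add: h_def fun_eq_iff algebra_simps)
  then have "h absolutely_integrable_on {0<..<1}"
    and h_integral: "integral {0<..<1} h = (- C * real i * \<beta> + C * real (n + 1) * \<beta> * a / (a + b)) * Beta a b"
    by (simp_all only: Beta_kernel_affine_integral [where p = "- C * real i * \<beta>" and q = "C * real (n + 1) * \<beta>",
                                                    OF \<open>a > 0\<close> \<open>b > 0\<close>])
  moreover have "h \<in> borel_measurable borel"
    unfolding h_def by measurable
  ultimately have substitution:
      "set_integrable lborel {0<..} (\<lambda>x. loglogistic_pdf \<alpha> \<beta> x * h (loglogistic_cdf \<alpha> \<beta> x))"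
      "(LINT x:{0<..}|lborel. loglogistic_pdf \<alpha> \<beta> x * h (loglogistic_cdf \<alpha> \<beta> x)) = integral {0<..<1} h"
    using loglogistic_substitution pos by blast+
  have "set_integrable lborel {0<..} (\<lambda>x. score i n \<alpha> \<beta> x * fos i n \<alpha> \<beta> x powr (\<tau> + 1))
          \<longleftrightarrow> set_integrable lborel {0<..} (\<lambda>x. loglogistic_pdf \<alpha> \<beta> x * h (loglogistic_cdf \<alpha> \<beta> x))"
    by (rule set_integrable_cong) (simp_all add: integrand)
  with substitution(1)
  show "set_integrable lborel {0<..} (\<lambda>x. score i n \<alpha> \<beta> x * fos i n \<alpha> \<beta> x powr (\<tau> + 1))"
    by simp
  have "xi i n \<tau> \<alpha> \<beta> = (LINT x:{0<..}|lborel. loglogistic_pdf \<alpha> \<beta> x * h (loglogistic_cdf \<alpha> \<beta> x))"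
    unfolding xi_def by (rule set_lebesgue_integral_cong) (simp_all add: integrand)
  also have "\<dots> = (- C * real i * \<beta> + C * real (n + 1) * \<beta> * a / (a + b)) * Beta a b"
    using substitution(2) h_integral by simp
  finally show "xi i n \<tau> \<alpha> \<beta> = C * (real (n + 1) * \<beta> * a / (a + b) - real i * \<beta>) * Beta a b"
    by (simp add: algebra_simps)
qed

(* a / (a + b) is the mean of Beta(a, b), so the left-hand side is the mean of the score
   (n + 1) beta F - i beta when F is Beta(a, b)-distributed. *)
lemma Beta_mean_score_eq:
  fixes n i :: nat and \<beta> \<tau> :: real
  defines "a \<equiv> real i * (\<tau> + 1) - \<tau> / \<beta>" and "b \<equiv> real (n - i + 1) * (\<tau> + 1) + \<tau> / \<beta>"
  assumes "i \<le> n" and \<beta>: "\<beta> \<noteq> 0" and \<tau>: "\<tau> + 1 \<noteq> 0"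
  shows "real (n + 1) * \<beta> * a / (a + b) - real i * \<beta> = - \<tau> / (\<tau> + 1)"
proof -
  have "a + b = real (n + 1) * (\<tau> + 1)"
    using \<open>i \<le> n\<close> by (simp add: a_def b_def of_nat_diff algebra_simps)
  then have cancel: "real (n + 1) * \<beta> * a / (a + b) = \<beta> * a / (\<tau> + 1)"
    by simp
  have "real (n + 1) * \<beta> * a / (a + b) - real i * \<beta> = (\<beta> * a - real i * \<beta> * (\<tau> + 1)) / (\<tau> + 1)"
    unfolding cancel using \<tau> by (simp add: field_simps)
  also have "\<beta> * a - real i * \<beta> * (\<tau> + 1) = - \<tau>"
    using \<beta> by (simp add: a_def field_simps)
  finally show ?thesis .
qed

theorem theorem5:
  fixes n i :: nat and \<alpha> \<beta> \<tau> :: real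
  assumes "n \<ge> 1" and "1 \<le> i" and "i \<le> n"
    and "\<alpha> > 0" and "\<beta> > 0" and "\<tau> \<ge> 0"
    and "real i * \<beta> * (\<tau> + 1) > \<tau>"
  shows "set_integrable lborel {0<..}
           (\<lambda>x. score i n \<alpha> \<beta> x * fos i n \<alpha> \<beta> x powr (\<tau> + 1))
       \<and> xi i n \<tau> \<alpha> \<beta> =
           cst i n powr (\<tau> + 1) * (\<beta> / \<alpha>) powr (\<tau> + 1)
           * Beta ((real (n - i + 1) * \<tau> * \<beta> + real (n - i + 1) * \<beta> + \<tau>) / \<beta>)
                  ((real i * \<tau> * \<beta> + real i * \<beta> - \<tau>) / \<beta>)
           * (- \<tau> / (\<beta> + \<tau> * \<beta>))
       \<and> K i n \<tau> \<alpha> \<beta> = J i n (2 * \<tau>) \<alpha> \<beta> - (xi i n \<tau> \<alpha> \<beta>)\<^sup>2"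
proof -
  define a where "a = real i * (\<tau> + 1) - \<tau> / \<beta>"
  define b where "b = real (n - i + 1) * (\<tau> + 1) + \<tau> / \<beta>"
  have "a > 0"
    using assms by (simp add: a_def field_simps)
  have "b > 0"
    unfolding b_def using assms by (intro add_pos_nonneg) auto
  have coefficient: "real (n + 1) * \<beta> * a / (a + b) - real i * \<beta> = - \<tau> / (\<tau> + 1)"
    unfolding a_def b_def using assms by (intro Beta_mean_score_eq) auto
  note Beta_combination = xi_eq_Beta_combination [of i n \<alpha> \<beta> \<tau>, folded a_def b_def,
                                                  OF assms(2-5) \<open>a > 0\<close> \<open>b > 0\<close>]
  have "xi i n \<tau> \<alpha> \<beta> = cst i n powr (\<tau> + 1) * (\<beta> / \<alpha>) powr \<tau> / \<alpha> * (- \<tau> / (\<tau> + 1)) * Beta a b"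
    using Beta_combination(2) unfolding coefficient .
  also have "\<dots> = cst i n powr (\<tau> + 1) * (\<beta> / \<alpha>) powr (\<tau> + 1) * Beta b a * (- \<tau> / (\<beta> + \<tau> * \<beta>))"
  proof -
    have "\<beta> + \<tau> * \<beta> = \<beta> * (\<tau> + 1)" and "(\<beta> / \<alpha>) powr (\<tau> + 1) = (\<beta> / \<alpha>) powr \<tau> * (\<beta> / \<alpha>)"
      using assms by (simp_all add: algebra_simps powr_add)
    then show ?thesis
      using assms by (simp add: Beta_commute)
  qed
  finally have "xi i n \<tau> \<alpha> \<beta>
                  = cst i n powr (\<tau> + 1) * (\<beta> / \<alpha>) powr (\<tau> + 1) * Beta b a * (- \<tau> / (\<beta> + \<tau> * \<beta>))" .
  moreover have "a = (real i * \<tau> * \<beta> + real i * \<beta> - \<tau>) / \<beta>"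
    and "b = (real (n - i + 1) * \<tau> * \<beta> + real (n - i + 1) * \<beta> + \<tau>) / \<beta>"
    using assms by (simp_all add: a_def b_def field_simps)
  ultimately show ?thesis
    using Beta_combination(1) by (simp add: K_def)
qed

end
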